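(* Let $n,T\in\mathbb{N}$ and let real numbers $r_{it}$, $i\in\{1,\ldots,n\}$, $t\in\{1,\ldots,T\}$, be given. Consider the random return vector $\boldsymbol{r}=(r_1,\ldots,r_n)^{\mathsf T}$ which takes the value $(r_{1t},\ldots,r_{nt})^{\mathsf T}$ in scenario $t$, each scenario $t\in\{1,\ldots,T\}$ having probability $1/T$, and let $\mu_i=\frac1T\sum_{t=1}^T r_{it}$, $\boldsymbol{\mu}=(\mu_1,\ldots,\mu_n)^{\mathsf T}$. Define the convex function $\mathrm{MAD}:\mathbb{R}^n\to\mathbb{R}$ by $$\mathrm{MAD}(\boldsymbol{x})=\mathbb{E}\big[|(\boldsymbol{r}-\boldsymbol{\mu})^{\mathsf T}\boldsymbol{x}|\big]=\frac1T\sum_{t=1}^T\Big|\sum_{i=1}^n (r_{it}-\mu_i)x_i\Big|,$$ and let $\partial\mathrm{MAD}(\boldsymbol{x})$ denote its (convex-analysis) subdifferential at $\boldsymbol{x}$. Let $\Delta^{n-1}=\{\boldsymbol{x}\in\mathbb{R}^n: x_i\ge0\ \forall i,\ \sum_i x_i=1\}$. Call $\boldsymbol{x}\in\Delta^{n-1}$ a MAD-RP portfolio if there exist $\boldsymbol{s}\in\partial\mathrm{MAD}(\boldsymbol{x})$ and $\lambda\in\mathbb{R}$ such that $x_i s_i=\lambda$ for all $i\in\{1,\ldots,n\}$ (i.e. there is a vector in $\{\boldsymbol{x}\cdot\boldsymbol{s}:\boldsymbol{s}\in\partial\mathrm{MAD}(\boldsymbol{x})\}$, $\cdot$ the componentwise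 product, all of whose components are equal). Suppose that the only vector $\boldsymbol{x}\in\mathbb{R}^n_+$ such that $(\boldsymbol{r}-\boldsymbol{\mu})^{\mathsf T}\boldsymbol{x}=0$ holds almost surely (i.e. $\sum_{i}(r_{it}-\mu_i)x_i=0$ for every $t$) is $\boldsymbol{x}=0$. Then there exists a unique MAD-RP portfolio.
   Context: $\mathbb{R}^n_+$ denotes the set of vectors in $\mathbb{R}^n$ with all components nonnegative. *)

theory Defs
  imports "HOL-Analysis.Analysis"
begin

text \<open>Scenario returns: r $ t $ i is the return of asset i in scenario t.
  Assets are indexed by the finite type 'n (n = CARD('n)), scenarios by the
  finite type 't (T = CARD('t)), each scenario having probability 1/T.\<close>

definition mean_ret :: "real^'n^'t::finite \<Rightarrow> real^'n" where
  "mean_ret r = (\<chi> i. (\<Sum>t\<in>UNIV. r $ t $ i) / real CARD('t))"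

definition MAD :: "real^'n^'t::finite \<Rightarrow> real^'n::finite \<Rightarrow> real" where
  "MAD r x = (\<Sum>t\<in>UNIV. \<bar>\<Sum>i\<in>UNIV. (r $ t $ i - mean_ret r $ i) * x $ i\<bar>) / real CARD('t)"

definition subdifferential :: "(real^'n::finite \<Rightarrow> real) \<Rightarrow> real^'n \<Rightarrow> (real^'n) set" where
  "subdifferential f x = {s. \<forall>y. f y \<ge> f x + s \<bullet> (y - x)}"

definition std_simplex :: "(real^'n::finite) set" where
  "std_simplex = {x. (\<forall>i. x $ i \<ge> 0) \<and> (\<Sum>i\<in>UNIV. x $ i) = 1}"

definition MAD_RP :: "real^'n^'t::finite \<Rightarrow> real^'n::finite \<Rightarrow> bool" where
  "MAD_RP r x \<longleftrightarrow> x \<in> std_simplex \<and>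
     (\<exists>s \<in> subdifferential (MAD r) x. \<exists>c::real. \<forall>i. x $ i * s $ i = c)"

end

theory Submission
  imports Defs
begin

text \<open>
  MAD is sublinear, and for a sublinear f a vector s is a subgradient at x iff s \<bullet> x = f x
  and s \<bullet> z \<le> f z for all z.

  Existence: the hypothesis makes MAD positive on the simplex, so by compactness and positive
  homogeneity MAD y \<ge> m * (\<Sum>i. y i) on the nonnegative orthant for some m > 0. Hence the
  logarithmic barrier MAD y - (\<Sum>i. ln (y i)) is coercive on the open orthant and attains its
  minimum at some y > 0. The optimality condition there says that the vector of the 1 / y i is
  a subgradient of MAD at y; rescaling y onto the simplex gives a portfolio x with
  x i * s i = 1 / (\<Sum>i. y i).

  Uniqueness: a risk parity portfolio x has x i > 0 and a subgradient s with x i * s i = c > 0.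
  For two of them, testing each subgradient against the other portfolio shows that
  b i = s i * x' i / c' satisfies \<Sum>i. b i \<le> n and \<Sum>i. 1 / b i \<le> n. Since b + 1 / b \<ge> 2
  with equality only at b = 1, all b i = 1, so x' is a multiple of x and hence equal to it.
\<close>

definition sublinear :: "('a::real_vector \<Rightarrow> real) \<Rightarrow> bool" where
  "sublinear f \<longleftrightarrow>
     (\<forall>c x. 0 \<le> c \<longrightarrow> f (c *\<^sub>R x) = c * f x) \<and> (\<forall>x y. f (x + y) \<le> f x + f y)"

lemma sublinear_scaleR: "sublinear f \<Longrightarrow> 0 \<le> c \<Longrightarrow> f (c *\<^sub>R x) = c * f x"
  by (simp add: sublinear_def)

lemma sublinear_add: "sublinear f \<Longrightarrow> f (x + y) \<le> f x + f y"
  by (simp add: sublinear_def)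

lemma sublinear_zero: "sublinear f \<Longrightarrow> f 0 = 0"
  using sublinear_scaleR[of f 0 0] by simp

lemma sublinear_imp_convex_on:
  assumes "sublinear f"
  shows "convex_on UNIV f"
proof (rule convex_onI)
  fix t :: real and x y assume "0 < t" "t < 1"
  then show "f ((1 - t) *\<^sub>R x + t *\<^sub>R y) \<le> (1 - t) * f x + t * f y"
    using sublinear_add[OF assms] sublinear_scaleR[OF assms] by (metis less_eq_real_def diff_ge_0_iff_ge)
qed simp

lemma subdifferential_sublinear_iff:
  assumes "sublinear f"
  shows "s \<in> subdifferential f x \<longleftrightarrow> s \<bullet> x = f x \<and> (\<forall>z. s \<bullet> z \<le> f z)"
proof
  assume "s \<in> subdifferential f x"
  then have sub: "f x + s \<bullet> (y - x) \<le> f y" for y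
    by (simp add: subdifferential_def)
  have "s \<bullet> x = f x"
    using sub[of 0] sub[of "2 *\<^sub>R x"]
    by (simp add: sublinear_zero[OF assms] sublinear_scaleR[OF assms] inner_diff_right)
  moreover have "s \<bullet> z \<le> f z" for z
    using sub[of "x + z"] sublinear_add[OF assms, of x z] by simp
  ultimately show "s \<bullet> x = f x \<and> (\<forall>z. s \<bullet> z \<le> f z)" by blast
qed (auto simp: subdifferential_def inner_diff_right)

definition risk_parity :: "(real^'n::finite \<Rightarrow> real) \<Rightarrow> real^'n \<Rightarrow> bool" where
  "risk_parity f x \<longleftrightarrow>
     x \<in> std_simplex \<and> (\<exists>s \<in> subdifferential f x. \<exists>c. \<forall>i. x $ i * s $ i = c)"

lemma risk_parity_subgradient_pos:
  fixes f :: "real^'n::finite \<Rightarrow> real"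
  assumes "sublinear f" and pos: "\<And>x. \<forall>i. 0 \<le> x $ i \<Longrightarrow> x \<noteq> 0 \<Longrightarrow> 0 < f x"
    and x: "x \<in> std_simplex" and s: "s \<in> subdifferential f x" and c: "\<forall>i. x $ i * s $ i = c"
  shows "f x = real CARD('n) * c" and "0 < c" and "0 < x $ i"
proof -
  show fx: "f x = real CARD('n) * c"
    using s c subdifferential_sublinear_iff[OF \<open>sublinear f\<close>] by (simp add: inner_vec_def mult.commute)
  have "x \<noteq> 0"
    using x by (auto simp: std_simplex_def)
  then have "0 < f x"
    using pos x by (simp add: std_simplex_def)
  then show "0 < c"
    using fx by (simp add: zero_less_mult_iff)
  then have "x $ i \<noteq> 0"
    using c by (metis mult_zero_left less_irrefl)
  then show "0 < x $ i"
    using x by (simp add: std_simplex_def order_less_le)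
qed

lemma eq_1_if_sum_and_sum_inverse_le_card:
  fixes b :: "'a \<Rightarrow> real"
  assumes "finite A" and pos: "\<forall>i\<in>A. 0 < b i"
    and "sum b A \<le> card A" and "(\<Sum>i\<in>A. 1 / b i) \<le> card A" and "i \<in> A"
  shows "b i = 1"
proof -
  have excess: "b j + 1 / b j - 2 = (b j - 1)\<^sup>2 / b j" if "j \<in> A" for j
    using pos[rule_format, OF that] by (simp add: field_simps power2_eq_square)
  then have nonneg: "\<forall>j\<in>A. 0 \<le> b j + 1 / b j - 2"
    using pos by (simp add: zero_le_divide_iff less_imp_le)
  have "(\<Sum>j\<in>A. b j + 1 / b j - 2) \<le> 0"
    using assms(3,4) by (simp add: sum.distrib sum_subtractf)
  then have "(\<Sum>j\<in>A. b j + 1 / b j - 2) = 0"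
    using nonneg by (simp add: order_antisym sum_nonneg)
  then have "(b i - 1)\<^sup>2 / b i = 0"
    using nonneg \<open>finite A\<close> \<open>i \<in> A\<close> excess by (simp add: sum_nonneg_eq_0_iff)
  then show ?thesis
    using pos[rule_format, OF \<open>i \<in> A\<close>] by simp
qed

lemma risk_parity_unique:
  fixes f :: "real^'n::finite \<Rightarrow> real"
  assumes "sublinear f" and pos: "\<And>x. \<forall>i. 0 \<le> x $ i \<Longrightarrow> x \<noteq> 0 \<Longrightarrow> 0 < f x"
    and "risk_parity f x" and "risk_parity f x'"
  shows "x = x'"
proof -
  obtain s c where x: "x \<in> std_simplex" and s: "s \<in> subdifferential f x" and c: "\<forall>i. x $ i * s $ i = c"
    using \<open>risk_parity f x\<close> by (auto simp: risk_parity_def)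
  obtain s' c' where x': "x' \<in> std_simplex" and s': "s' \<in> subdifferential f x'" and c': "\<forall>i. x' $ i * s' $ i = c'"
    using \<open>risk_parity f x'\<close> by (auto simp: risk_parity_def)
  note facts = risk_parity_subgradient_pos[OF assms(1,2) x s c]
  note facts' = risk_parity_subgradient_pos[OF assms(1,2) x' s' c']
  have s_eq: "s $ i = c / x $ i" and s'_eq: "s' $ i = c' / x' $ i" for i
    using c[rule_format, of i] c'[rule_format, of i] facts(3)[of i] facts'(3)[of i]
    by (simp_all add: field_simps)
  define b where "b i = s $ i * x' $ i / c'" for i
  have inverse_b: "1 / b i = s' $ i * x $ i / c" for i
    using facts(2,3) facts'(2,3) by (simp add: b_def s_eq s'_eq field_simps)
  have "sum b UNIV = (s \<bullet> x') / c'"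
    by (simp add: b_def inner_vec_def sum_divide_distrib)
  also have "\<dots> \<le> f x' / c'"
    using s facts'(2) subdifferential_sublinear_iff[OF \<open>sublinear f\<close>] by (simp add: divide_right_mono)
  finally have sum_b: "sum b UNIV \<le> card (UNIV :: 'n set)"
    using facts'(1,2) by simp
  have "(\<Sum>i\<in>UNIV. 1 / b i) = (s' \<bullet> x) / c"
    by (simp add: inverse_b inner_vec_def sum_divide_distrib mult.commute)
  also have "\<dots> \<le> f x / c"
    using s' facts(2) subdifferential_sublinear_iff[OF \<open>sublinear f\<close>] by (simp add: divide_right_mono)
  finally have sum_inverse_b: "(\<Sum>i\<in>UNIV. 1 / b i) \<le> card (UNIV :: 'n set)"
    using facts(1,2) by simp
  have "\<forall>i\<in>UNIV. 0 < b i"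
    using facts(2,3) facts'(2,3) by (simp add: b_def s_eq)
  then have "b i = 1" for i
    by (rule eq_1_if_sum_and_sum_inverse_le_card[OF finite_class.finite_UNIV _ sum_b sum_inverse_b]) simp
  then have proportional: "x' $ i = (c' / c) * x $ i" for i
    using facts(2,3) facts'(2) by (simp add: b_def s_eq field_simps)
  have "(\<Sum>i\<in>UNIV. x' $ i) = (c' / c) * (\<Sum>i\<in>UNIV. x $ i)"
    by (simp only: proportional sum_distrib_left)
  then have "c' / c = 1"
    using x x' by (simp add: std_simplex_def)
  then show ?thesis
    by (simp add: vec_eq_iff proportional)
qed

lemma compact_std_simplex: "compact (std_simplex :: (real^'n::finite) set)"
proof -
  have "closed (std_simplex :: (real^'n) set)"
    unfolding std_simplex_def
    by (intro closed_Collect_conj closed_Collect_all closed_Collect_le closed_Collect_eq continuous_intros)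
  moreover have "std_simplex \<subseteq> cbox (0::real^'n) (\<chi> i. 1)"
  proof
    fix x :: "real^'n" assume x: "x \<in> std_simplex"
    then have "x $ i \<le> (\<Sum>j\<in>UNIV. x $ j)" for i
      by (intro member_le_sum) (auto simp: std_simplex_def)
    with x show "x \<in> cbox 0 (\<chi> i. 1)"
      by (auto simp: mem_box_cart std_simplex_def)
  qed
  ultimately show ?thesis
    using bounded_cbox bounded_subset compact_eq_bounded_closed by blast
qed

lemma sublinear_ge_mult_sum:
  fixes f :: "real^'n::finite \<Rightarrow> real"
  assumes "sublinear f" and "continuous_on UNIV f"
    and pos: "\<And>x. \<forall>i. 0 \<le> x $ i \<Longrightarrow> x \<noteq> 0 \<Longrightarrow> 0 < f x"
  obtains m where "0 < m" and "\<And>y. \<forall>i. 0 \<le> y $ i \<Longrightarrow> m * (\<Sum>i\<in>UNIV. y $ i) \<le> f y"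
proof -
  have "(\<chi> i. 1 / real CARD('n)) \<in> (std_simplex :: (real^'n) set)"
    by (simp add: std_simplex_def)
  then obtain x where x: "x \<in> std_simplex" and min: "\<forall>y\<in>std_simplex. f x \<le> f y"
    using continuous_attains_inf[OF compact_std_simplex _ continuous_on_subset[OF assms(2)]] by blast
  have "0 < f x"
    using pos x by (force simp: std_simplex_def)
  moreover have "f x * (\<Sum>i\<in>UNIV. y $ i) \<le> f y" if y: "\<forall>i. 0 \<le> y $ i" for y
  proof (cases "y = 0")
    case True
    then show ?thesis by (simp add: sublinear_zero[OF \<open>sublinear f\<close>])
  next
    case False
    define S where "S = (\<Sum>i\<in>UNIV. y $ i)"
    obtain j where "y $ j \<noteq> 0"
      using False by (auto simp: vec_eq_iff)
    then have "0 < y $ j"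
      using y by (simp add: order_less_le)
    also have "y $ j \<le> S"
      unfolding S_def using y by (intro member_le_sum) auto
    finally have "0 < S" .
    then have "(1 / S) *\<^sub>R y \<in> std_simplex"
      using y by (auto simp: std_simplex_def S_def sum_divide_distrib[symmetric])
    then have "f x \<le> f y / S"
      using min \<open>0 < S\<close> by (force simp: sublinear_scaleR[OF \<open>sublinear f\<close>])
    with \<open>0 < S\<close> show ?thesis
      by (simp add: S_def[symmetric] field_simps)
  qed
  ultimately show ?thesis
    using that by blast
qed

lemma ln_barrier_ge:
  fixes m u :: real
  assumes "0 < m" and "0 < u"
  shows "1 + ln m \<le> m * u - ln u"
  using ln_le_minus_one[of "m * u"] assms by (simp add: ln_mult)

lemma ln_barrier_sublevel_bounded:
  fixes m E :: real
  assumes "0 < m"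
  obtains a b where "0 < a" and "\<And>u. 0 < u \<Longrightarrow> m * u - ln u \<le> E \<Longrightarrow> a \<le> u \<and> u \<le> b"
proof
  fix u :: real assume u: "0 < u" and le: "m * u - ln u \<le> E"
  then have "- E \<le> ln u"
    using mult_pos_pos[OF assms u] by linarith
  then show "exp (- E) \<le> u \<and> u \<le> 2 * (E - 1 - ln (m / 2)) / m"
    using ln_barrier_ge[of "m / 2" u] u le assms by (simp add: ln_ge_iff field_simps)
qed simp

definition log_barrier :: "(real^'n::finite \<Rightarrow> real) \<Rightarrow> real^'n \<Rightarrow> real" where
  "log_barrier f y = f y - (\<Sum>i\<in>UNIV. ln (y $ i))"

lemma log_barrier_attains_min:
  fixes f :: "real^'n::finite \<Rightarrow> real"
  assumes "continuous_on UNIV f" and "0 < m"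
    and lower: "\<And>y. \<forall>i. 0 \<le> y $ i \<Longrightarrow> m * (\<Sum>i\<in>UNIV. y $ i) \<le> f y"
  obtains y where "is_arg_min (log_barrier f) (\<lambda>z. \<forall>i. 0 < z $ i) y"
proof -
  define L where "L = 1 + ln m"
  obtain a b where "0 < a"
    and bounds: "\<And>u. 0 < u \<Longrightarrow> m * u - ln u \<le> log_barrier f 1 - (real CARD('n) - 1) * L \<Longrightarrow>
                   a \<le> u \<and> u \<le> b"
    using ln_barrier_sublevel_bounded[OF \<open>0 < m\<close>] by blast
  define K where "K = cbox (\<chi> i. a) (\<chi> i. b :: real^'n)"
  have sublevel: "z \<in> K" if z: "\<forall>i. 0 < z $ i" and le: "log_barrier f z \<le> log_barrier f 1" for z
  proof -
    have "m * z $ j - ln (z $ j) \<le> log_barrier f 1 - (real CARD('n) - 1) * L" for j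
    proof -
      have "m * z $ j - ln (z $ j) - L \<le> (\<Sum>i\<in>UNIV. m * z $ i - ln (z $ i) - L)"
        by (rule member_le_sum[where f = "\<lambda>i. m * z $ i - ln (z $ i) - L"])
          (use ln_barrier_ge[OF \<open>0 < m\<close>] z in \<open>auto simp: L_def\<close>)
      also have "\<dots> = m * (\<Sum>i\<in>UNIV. z $ i) - (\<Sum>i\<in>UNIV. ln (z $ i)) - real CARD('n) * L"
        by (simp add: sum_subtractf sum_distrib_left)
      also have "\<dots> \<le> log_barrier f z - real CARD('n) * L"
        using lower z by (simp add: log_barrier_def less_imp_le)
      finally show ?thesis
        using le by (simp add: algebra_simps)
    qed
    then show ?thesis
      using bounds z by (simp add: K_def mem_box_cart)
  qed
  have "1 \<in> K"
    by (rule sublevel) auto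
  moreover have "continuous_on K (log_barrier f)"
    unfolding log_barrier_def
  proof (intro continuous_intros continuous_on_subset[OF assms(1)] ballI)
    fix z i assume "z \<in> K"
    then show "z $ i \<noteq> 0"
      using \<open>0 < a\<close> by (auto simp: K_def mem_box_cart dest!: spec[of _ i])
  qed simp
  ultimately obtain y where "y \<in> K" and min: "\<forall>z\<in>K. log_barrier f y \<le> log_barrier f z"
    using continuous_attains_inf[of K "log_barrier f"] by (auto simp: K_def)
  have "\<forall>i. 0 < y $ i"
    using \<open>y \<in> K\<close> \<open>0 < a\<close> by (auto simp: K_def mem_box_cart intro: less_le_trans)
  moreover have "log_barrier f y \<le> log_barrier f z" if "\<forall>i. 0 < z $ i" for z
    using sublevel[OF that] min \<open>1 \<in> K\<close> by (cases "log_barrier f z \<le> log_barrier f 1") force+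
  ultimately show ?thesis
    using that by (auto simp: is_arg_min_linorder)
qed

lemma log_barrier_min_difference_quotient:
  fixes f :: "real^'n::finite \<Rightarrow> real"
  assumes "convex_on UNIV f" and min: "is_arg_min (log_barrier f) (\<lambda>z. \<forall>i. 0 < z $ i) y"
    and t: "0 < t" "t \<le> 1" and w: "\<forall>i. 0 < y $ i + t * d $ i"
  shows "(\<Sum>i\<in>UNIV. d $ i / (y $ i + t * d $ i)) \<le> f (y + d) - f y"
proof -
  define w where "w = y + t *\<^sub>R d"
  have w_nth: "w $ i = y $ i + t * d $ i" for i
    by (simp add: w_def)
  have y: "0 < y $ i" for i
    using min by (simp add: is_arg_min_def)
  have "t * d $ i / w $ i \<le> ln (w $ i) - ln (y $ i)" for i
  proof -
    have "0 < w $ i"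
      using w by (simp add: w_nth)
    have "ln (y $ i / w $ i) \<le> y $ i / w $ i - 1"
      using \<open>0 < w $ i\<close> y by (simp add: ln_le_minus_one)
    also have "\<dots> = - (t * d $ i / w $ i)"
      using \<open>0 < w $ i\<close> by (simp add: w_nth field_simps)
    finally show ?thesis
      using \<open>0 < w $ i\<close> y[of i] by (simp add: ln_div)
  qed
  then have "t * (\<Sum>i\<in>UNIV. d $ i / w $ i) \<le> (\<Sum>i\<in>UNIV. ln (w $ i)) - (\<Sum>i\<in>UNIV. ln (y $ i))"
    by (simp add: sum_distrib_left sum_subtractf[symmetric] sum_mono)
  also have "\<dots> \<le> f w - f y"
  proof -
    have "\<forall>i. 0 < w $ i"
      using w by (simp add: w_nth)
    then have "log_barrier f y \<le> log_barrier f w"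
      using min by (simp add: is_arg_min_linorder)
    then show ?thesis
      by (simp add: log_barrier_def)
  qed
  also have "\<dots> \<le> t * (f (y + d) - f y)"
    using convex_onD[OF assms(1), of t y "y + d"] t
    by (simp add: w_def algebra_simps)
  finally show ?thesis
    using t by (simp add: w_nth)
qed

lemma log_barrier_min_subgradient:
  fixes f :: "real^'n::finite \<Rightarrow> real"
  assumes "convex_on UNIV f" and min: "is_arg_min (log_barrier f) (\<lambda>z. \<forall>i. 0 < z $ i) y"
  shows "(\<chi> i. 1 / y $ i) \<in> subdifferential f y"
proof -
  have y: "0 < y $ i" for i
    using min by (simp add: is_arg_min_def)
  have "(\<Sum>i\<in>UNIV. d $ i / y $ i) \<le> f (y + d) - f y" for d
  proof (rule tendsto_le[OF trivial_limit_at_right_real tendsto_const])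
    show "((\<lambda>t. \<Sum>i\<in>UNIV. d $ i / (y $ i + t * d $ i)) \<longlongrightarrow> (\<Sum>i\<in>UNIV. d $ i / y $ i)) (at_right 0)"
      using y by (auto intro!: tendsto_eq_intros simp: less_imp_neq[symmetric])
    have "\<forall>\<^sub>F t in at_right 0. 0 < y $ i + t * d $ i" for i
      using y[of i] by (auto intro!: order_tendstoD(1) tendsto_eq_intros)
    then have "\<forall>\<^sub>F t in at_right 0. \<forall>i. 0 < y $ i + t * d $ i"
      by (rule eventually_all_finite)
    moreover have "\<forall>\<^sub>F t in at_right (0::real). 0 < t \<and> t \<le> 1"
      by (rule eventually_mono[OF eventually_at_right_real[of 0 1]]) auto
    ultimately show "\<forall>\<^sub>F t in at_right 0. (\<Sum>i\<in>UNIV. d $ i / (y $ i + t * d $ i)) \<le> f (y + d) - f y"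
      by eventually_elim (use log_barrier_min_difference_quotient[OF assms] in blast)
  qed
  from this[of "z - y" for z] show ?thesis
    by (simp add: subdifferential_def inner_vec_def add.commute le_diff_eq)
qed

lemma risk_parity_exists:
  fixes f :: "real^'n::finite \<Rightarrow> real"
  assumes "sublinear f" and "continuous_on UNIV f"
    and pos: "\<And>x. \<forall>i. 0 \<le> x $ i \<Longrightarrow> x \<noteq> 0 \<Longrightarrow> 0 < f x"
  shows "\<exists>x. risk_parity f x"
proof -
  obtain m where "0 < m" and "\<And>y. \<forall>i. 0 \<le> y $ i \<Longrightarrow> m * (\<Sum>i\<in>UNIV. y $ i) \<le> f y"
    using sublinear_ge_mult_sum[OF assms] by blast
  then obtain y where min: "is_arg_min (log_barrier f) (\<lambda>z. \<forall>i. 0 < z $ i) y"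
    using log_barrier_attains_min[OF assms(2)] by blast
  then have y: "0 < y $ i" for i
    by (simp add: is_arg_min_def)
  define s where "s = (\<chi> i. 1 / y $ i)"
  have "s \<in> subdifferential f y"
    unfolding s_def by (rule log_barrier_min_subgradient[OF sublinear_imp_convex_on[OF assms(1)] min])
  then have s: "s \<bullet> y = f y" "\<forall>z. s \<bullet> z \<le> f z"
    using subdifferential_sublinear_iff[OF assms(1)] by blast+
  define S where "S = (\<Sum>i\<in>UNIV. y $ i)"
  have "0 < S"
    unfolding S_def using y by (simp add: sum_pos)
  define x where "x = (1 / S) *\<^sub>R y"
  have "s \<bullet> x = f x"
    using s(1) \<open>0 < S\<close> by (simp add: x_def sublinear_scaleR[OF assms(1)])
  then have "s \<in> subdifferential f x"
    using s(2) subdifferential_sublinear_iff[OF assms(1)] by blast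
  moreover have "x \<in> std_simplex"
    using y \<open>0 < S\<close> by (simp add: x_def std_simplex_def S_def sum_divide_distrib[symmetric] less_imp_le)
  moreover have "\<forall>i. x $ i * s $ i = 1 / S"
    using y by (simp add: x_def s_def less_imp_neq[symmetric])
  ultimately show ?thesis
    unfolding risk_parity_def by blast
qed

lemma sublinear_MAD: "sublinear (MAD r)"
proof -
  have "\<bar>\<Sum>i\<in>UNIV. a i * (x $ i + y $ i)\<bar> \<le>
          \<bar>\<Sum>i\<in>UNIV. a i * x $ i\<bar> + \<bar>\<Sum>i\<in>UNIV. a i * y $ i\<bar>"
    for a :: "'n::finite \<Rightarrow> real" and x y :: "real^'n"
    by (simp add: distrib_left sum.distrib abs_triangle_ineq)
  then have "MAD r (x + y) \<le> MAD r x + MAD r y" for x y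
    unfolding MAD_def add_divide_distrib[symmetric] sum.distrib[symmetric]
    by (intro divide_right_mono sum_mono) auto
  moreover have "MAD r (c *\<^sub>R x) = c * MAD r x" if "0 \<le> c" for c x
    using that by (simp add: MAD_def mult.left_commute[of _ c] abs_mult sum_distrib_left[symmetric])
  ultimately show ?thesis
    by (simp add: sublinear_def)
qed

lemma continuous_on_MAD: "continuous_on S (MAD r)"
  unfolding MAD_def by (intro continuous_intros) auto

lemma MAD_nonneg: "0 \<le> MAD r x"
  by (simp add: MAD_def sum_nonneg)

lemma MAD_eq_0_iff:
  "MAD r x = 0 \<longleftrightarrow> (\<forall>t. (\<Sum>i\<in>UNIV. (r $ t $ i - mean_ret r $ i) * x $ i) = 0)"
  by (simp add: MAD_def sum_nonneg_eq_0_iff)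

theorem proposition2:
  fixes r :: "real^'n::finite^'t::finite"
  assumes "\<forall>x::real^'n. (\<forall>i. x $ i \<ge> 0) \<and>
             (\<forall>t. (\<Sum>i\<in>UNIV. (r $ t $ i - mean_ret r $ i) * x $ i) = 0) \<longrightarrow> x = 0"
  shows "\<exists>!x. MAD_RP r x"
proof -
  have pos: "0 < MAD r x" if "\<forall>i. 0 \<le> x $ i" and "x \<noteq> 0" for x
    using assms that MAD_eq_0_iff[of r x] MAD_nonneg[of r x] by force
  have "MAD_RP r = risk_parity (MAD r)"
    by (simp add: fun_eq_iff MAD_RP_def risk_parity_def)
  then show ?thesis
    using risk_parity_exists[OF sublinear_MAD continuous_on_MAD pos]
      risk_parity_unique[OF sublinear_MAD pos] by metis
qed

end
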